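(* Let $U\in C^{3}(\mathbb{R}^{d})$ be a Morse function with finitely many critical points satisfying the growth conditions in the context, and let $\boldsymbol{\ell}$ be a smooth vector field with $\nabla U\cdot\boldsymbol{\ell}\equiv0$. For $\epsilon>0$ let $\mathscr{L}_{\epsilon}f=-(\nabla U+\boldsymbol{\ell})\cdot\nabla f+\epsilon\Delta f$. Then for every $\epsilon>0$ there exists $r_{0}=r_{0}(\epsilon)>0$ such that $(\mathscr{L}_{\epsilon}U)(\boldsymbol{x})\le-3$ for all $\boldsymbol{x}\notin\mathcal{D}_{r_{0}}(\boldsymbol{0})$, where $\mathcal{D}_{r}(\boldsymbol{0})$ is the open ball of radius $r$ centered at the origin.
   Context: Growth conditions: $\lim_{n\to\infty}\inf_{|\boldsymbol{x}|\ge n}U(\boldsymbol{x})/|\boldsymbol{x}|=\infty$, $\lim_{|\boldsymbol{x}|\to\infty}\frac{\boldsymbol{x}}{|\boldsymbol{x}|}\cdot\nabla U(\boldsymbol{x})=\infty$, $\lim_{|\boldsymbol{x}|\to\infty}\{|\nabla U(\boldsymbol{x})|-2\Delta U(\boldsymbol{x})\}=\infty$. *)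

theory Defs
  imports "HOL-Analysis.Analysis"
begin

definition pd :: "'n::finite \<Rightarrow> (real^'n \<Rightarrow> real) \<Rightarrow> real^'n \<Rightarrow> real" where
  "pd i f x = frechet_derivative f (at x) (axis i 1)"

definition grad :: "(real^'n::finite \<Rightarrow> real) \<Rightarrow> real^'n \<Rightarrow> real^'n" where
  "grad f x = (\<chi> i. pd i f x)"

definition laplacian :: "(real^'n::finite \<Rightarrow> real) \<Rightarrow> real^'n \<Rightarrow> real" where
  "laplacian f x = (\<Sum>i\<in>UNIV. pd i (pd i f) x)"

definition hessian :: "(real^'n::finite \<Rightarrow> real) \<Rightarrow> real^'n \<Rightarrow> real^'n^'n" where
  "hessian f x = (\<chi> i j. pd j (pd i f) x)"

fun Ck :: "nat \<Rightarrow> (real^'n::finite \<Rightarrow> real) \<Rightarrow> bool" where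
  "Ck 0 f = continuous_on UNIV f"
| "Ck (Suc k) f = (continuous_on UNIV f \<and> (\<forall>x. f differentiable (at x)) \<and> (\<forall>i. Ck k (pd i f)))"

definition smooth_field :: "(real^'n::finite \<Rightarrow> real^'n) \<Rightarrow> bool" where
  "smooth_field l = (\<forall>k j. Ck k (\<lambda>x. l x $ j))"

definition critical_points :: "(real^'n::finite \<Rightarrow> real) \<Rightarrow> (real^'n) set" where
  "critical_points f = {x. grad f x = 0}"

definition morse :: "(real^'n::finite \<Rightarrow> real) \<Rightarrow> bool" where
  "morse f = (\<forall>x\<in>critical_points f. det (hessian f x) \<noteq> 0)"

definition gen :: "(real^'n::finite \<Rightarrow> real) \<Rightarrow> (real^'n \<Rightarrow> real^'n) \<Rightarrow> real
    \<Rightarrow> (real^'n \<Rightarrow> real) \<Rightarrow> real^'n \<Rightarrow> real" where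
  "gen U l eps f x = - ((grad U x + l x) \<bullet> grad f x) + eps * laplacian f x"

end

theory Submission
  imports Defs
begin

(* Since grad U is orthogonal to l, the generator applied to U is eps * laplacian U - |grad U|^2.
   The radial growth condition forces |grad U| to infinity, and the third growth condition
   makes laplacian U at most |grad U| / 2 far out, so the negative square dominates. *)

lemma inner_sgn_le_norm:
  fixes x v :: "'a::real_inner"
  shows "sgn x \<bullet> v \<le> norm v"
proof -
  have "sgn x \<bullet> v \<le> norm (sgn x) * norm v"
    by (rule norm_cauchy_schwarz)
  also have "\<dots> \<le> norm v"
    by (simp add: norm_sgn)
  finally show ?thesis .
qed

lemma filterlim_norm_at_top_if_radial_at_top:
  fixes f :: "'a::real_inner \<Rightarrow> 'a"
  assumes "filterlim (\<lambda>x. (x /\<^sub>R norm x) \<bullet> f x) at_top F"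
  shows "filterlim (\<lambda>x. norm (f x)) at_top F"
  using assms by (rule filterlim_at_top_mono) (simp add: inner_sgn_le_norm flip: sgn_div_norm)

lemma eventually_at_infinity_outside_ball:
  fixes P :: "'a::real_normed_vector \<Rightarrow> bool"
  assumes "eventually P at_infinity"
  shows "\<exists>r>0. \<forall>x. x \<notin> ball 0 r \<longrightarrow> P x"
  using assms unfolding eventually_at_infinity_pos by (auto simp: not_less)

lemma gen_self_eq:
  assumes "grad U x \<bullet> l x = 0"
  shows "gen U l eps U x = eps * laplacian U x - (norm (grad U x))\<^sup>2"
  using assms
  by (simp add: gen_def inner_add_left inner_commute[of "l x"] power2_norm_eq_inner)

lemma half_weighted_sub_square_le:
  fixes eps g a :: real
  assumes "0 \<le> eps" and "eps + 2 \<le> g" and "2 * a \<le> g"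
  shows "eps * a - g\<^sup>2 \<le> -3"
proof -
  have "eps * a \<le> eps * (g / 2)"
    using assms by (intro mult_left_mono) auto
  moreover have "2 * 2 \<le> g * (g - eps / 2)"
    using assms by (intro mult_mono) auto
  ultimately show ?thesis
    by (simp add: power2_eq_square algebra_simps)
qed

theorem lemma5p1:
  fixes U :: "real^'n::finite \<Rightarrow> real" and l :: "real^'n \<Rightarrow> real^'n"
  assumes C3: "Ck 3 U"
    and Morse: "morse U"
    and fin: "finite (critical_points U)"
    and grow1: "filterlim (\<lambda>x. U x / norm x) at_top at_infinity"
    and grow2: "filterlim (\<lambda>x. (x /\<^sub>R norm x) \<bullet> grad U x) at_top at_infinity"
    and grow3: "filterlim (\<lambda>x. norm (grad U x) - 2 * laplacian U x) at_top at_infinity"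
    and l_smooth: "smooth_field l"
    and orth: "\<And>x. grad U x \<bullet> l x = 0"
  shows "\<forall>eps>0. \<exists>r0>0. \<forall>x. x \<notin> ball 0 r0 \<longrightarrow> gen U l eps U x \<le> -3"
proof (intro allI impI)
  fix eps :: real
  assume "eps > 0"
  have "filterlim (\<lambda>x. norm (grad U x)) at_top at_infinity"
    using grow2 by (rule filterlim_norm_at_top_if_radial_at_top)
  then have "\<forall>\<^sub>F x in at_infinity. eps + 2 \<le> norm (grad U x)"
    by (simp add: filterlim_at_top)
  moreover have "\<forall>\<^sub>F x in at_infinity. 2 * laplacian U x \<le> norm (grad U x)"
    using grow3 unfolding filterlim_at_top by (auto elim: allE[of _ 0])
  ultimately have "\<forall>\<^sub>F x in at_infinity. gen U l eps U x \<le> -3"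
    by eventually_elim
      (use \<open>eps > 0\<close> in \<open>simp add: gen_self_eq orth half_weighted_sub_square_le\<close>)
  then show "\<exists>r0>0. \<forall>x. x \<notin> ball 0 r0 \<longrightarrow> gen U l eps U x \<le> -3"
    by (rule eventually_at_infinity_outside_ball)
qed

end
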